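(* Let $X$ be a proper, path connected metric space and let $S=\{x_i\}_{i\in I}$ be a discrete subset of $X$. Fix a positive integer $n\le \#(S)$. Then $$\bigcup_{i\in I} B_n(x_i)=X \qquad\text{and}\qquad b_n(x_i)\cap b_n(x_j)=\emptyset \ \text{ whenever } i\neq j.$$
   Context: $(X,d)$ is a metric space. It is proper if for every $x\in X$ the function $d(x,\cdot)$ is a proper map (in particular every closed ball is compact). A subset $S\subseteq X$ is discrete if every compact subset of $X$ contains only finitely many points of $S$. For $x\in X$ and $r>0$ write $N_r(x)=\{y\in X: d(x,y)<r\}$ and $C_r(x)=\{y\in X: d(x,y)=r\}$; $\#(\cdot)$ denotes cardinality. For $x_0\in S$, a positive integer $n\le\#(S)$, and $x\in X$ with $r=d(x,x_0)$, define: $x\in b_n(x_0)$ iff $\#(N_r(x)\cap S)=n-1$ and $C_r(x)\cap S=\{x_0\}$; and $x\in B_n(x_0)$ iff $\#(N_r(x)\cap S)=m$ and $\#(C_r(x)\cap S)=\ell$ for some integers $m\ge 0$, $\ell\ge 1$ with $m+1\le n\le m+\ell$. ($B_n(x_0)$ is called the $n$-th Brillouin zone with base point $x_0$.) *)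

theory Defs
  imports "HOL-Analysis.Analysis"
begin

text \<open>The metric space X is the whole (nonempty) type 'a of class metric_space.
  N_r(x) = ball x r, C_r(x) = sphere x r.\<close>

definition proper_metric_space :: "'a::metric_space itself \<Rightarrow> bool" where
  "proper_metric_space _ \<longleftrightarrow>
     (\<forall>(x::'a) (K::real set). compact K \<longrightarrow> compact {y. dist x y \<in> K})"

definition discrete_subset :: "'a::metric_space set \<Rightarrow> bool" where
  "discrete_subset S \<longleftrightarrow> (\<forall>K. compact K \<longrightarrow> finite (K \<inter> S))"

definition small_zone :: "'a::metric_space set \<Rightarrow> nat \<Rightarrow> 'a \<Rightarrow> 'a set" where
  "small_zone S n x0 = {x. let r = dist x x0 in
      finite (ball x r \<inter> S) \<and> card (ball x r \<inter> S) = n - 1 \<and> sphere x r \<inter> S = {x0}}"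

definition brillouin_zone :: "'a::metric_space set \<Rightarrow> nat \<Rightarrow> 'a \<Rightarrow> 'a set" where
  "brillouin_zone S n x0 = {x. let r = dist x x0 in
      \<exists>m l::nat. finite (ball x r \<inter> S) \<and> card (ball x r \<inter> S) = m \<and>
        finite (sphere x r \<inter> S) \<and> card (sphere x r \<inter> S) = l \<and>
        l \<ge> 1 \<and> m + 1 \<le> n \<and> n \<le> m + l}"

end

theory Submission
  imports Defs
begin

text \<open>For a point x, list the points of S by increasing distance from x; properness and
  discreteness make every ball around x meet S in finitely many points, so there is a
  smallest distance r = d(x,y), y \<in> S, at which the closed ball around x contains at least
  n points of S. Then the open ball contains fewer than n of them, i.e. x \<in> B_n(y).
  If x lay in b_n(a) and b_n(b) with d(x,a) < d(x,b), the open ball of radius d(x,b)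
  would contain a together with the n - 1 points of S closer to x than a, too many;
  and d(x,a) = d(x,b) is excluded because the sphere meets S only in a, resp. only in b.\<close>

lemma finite_cball_Int_discrete:
  fixes S :: "'a::metric_space set"
  assumes "proper_metric_space TYPE('a)" "discrete_subset S"
  shows "finite (cball x r \<inter> S)"
proof -
  have "cball x r = {y. dist x y \<in> {0..r}}"
    by auto
  moreover have "compact {y. dist x y \<in> {0..r}}"
    using assms(1) unfolding proper_metric_space_def by blast
  ultimately show ?thesis
    using assms(2) unfolding discrete_subset_def by metis
qed

lemma card_cball_Int_eq:
  assumes "finite (cball x r \<inter> S)"
  shows "card (cball x r \<inter> S) = card (ball x r \<inter> S) + card (sphere x r \<inter> S)"
proof -
  have "cball x r \<inter> S = (ball x r \<inter> S) \<union> (sphere x r \<inter> S)"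
    by auto
  moreover have "finite (ball x r \<inter> S)" "finite (sphere x r \<inter> S)"
    using assms by (auto intro: finite_subset[OF _ assms])
  ultimately show ?thesis
    by (simp add: card_Un_disjoint disjoint_iff)
qed

lemma mem_brillouin_zoneI:
  assumes "finite (cball x (dist x y) \<inter> S)" "y \<in> S"
    and "card (ball x (dist x y) \<inter> S) < n" "n \<le> card (cball x (dist x y) \<inter> S)"
  shows "x \<in> brillouin_zone S n y"
proof -
  let ?r = "dist x y"
  have finite_parts: "finite (ball x ?r \<inter> S)" "finite (sphere x ?r \<inter> S)"
    by (auto intro: finite_subset[OF _ assms(1)])
  have "y \<in> sphere x ?r \<inter> S"
    using assms(2) by simp
  then have "1 \<le> card (sphere x ?r \<inter> S)"
    using finite_parts(2) by (metis One_nat_def Suc_leI card_gt_0_iff empty_iff)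
  then show ?thesis
    using assms card_cball_Int_eq[OF assms(1)] finite_parts
    by (auto simp: brillouin_zone_def Let_def dist_commute)
qed

lemma obtain_farthest_in_ball_Int:
  assumes "finite (ball x r \<inter> S)" "ball x r \<inter> S \<noteq> {}"
  obtains z where "z \<in> S" "dist x z < r" "ball x r \<inter> S \<subseteq> cball x (dist x z) \<inter> S"
proof -
  have "Max (dist x ` (ball x r \<inter> S)) \<in> dist x ` (ball x r \<inter> S)"
    using assms by simp
  then obtain z where "z \<in> ball x r \<inter> S" "dist x z = Max (dist x ` (ball x r \<inter> S))"
    by (metis imageE)
  moreover have "ball x r \<inter> S \<subseteq> cball x (dist x z) \<inter> S"
    using assms(1) calculation(2) by auto
  ultimately show ?thesis
    using that by auto
qed

lemma obtain_nth_nearest_point: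
  fixes S :: "'a::metric_space set"
  assumes finite_cball: "\<And>r. finite (cball x r \<inter> S)"
    and "n \<ge> 1" and "infinite S \<or> n \<le> card S"
  obtains y where "y \<in> S" "card (ball x (dist x y) \<inter> S) < n"
    "n \<le> card (cball x (dist x y) \<inter> S)"
proof -
  obtain T where T: "T \<subseteq> S" "card T = n"
    using assms(3) by (meson infinite_arbitrarily_large obtain_subset_with_card_n)
  have "finite T" "T \<noteq> {}"
    using T \<open>n \<ge> 1\<close> card.infinite by fastforce+
  define R where "R = Max (dist x ` T)"
  have T_sub: "T \<subseteq> cball x R \<inter> S"
    using T \<open>finite T\<close> by (auto simp: R_def)
  define D where "D = {d \<in> dist x ` (cball x R \<inter> S). n \<le> card (cball x d \<inter> S)}"
  have "finite D"
    using finite_cball[of R] by (auto simp: D_def)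
  have "R \<in> dist x ` T"
    using \<open>finite T\<close> \<open>T \<noteq> {}\<close> by (simp add: R_def)
  moreover have "n \<le> card (cball x R \<inter> S)"
    using card_mono[OF finite_cball T_sub] T by simp
  ultimately have "R \<in> D"
    using T_sub by (auto simp: D_def)
  define r where "r = Min D"
  have "r \<in> D" and r_least: "\<And>d. d \<in> D \<Longrightarrow> r \<le> d"
    using \<open>finite D\<close> \<open>R \<in> D\<close> unfolding r_def by (auto intro: Min_in)
  then obtain y where y: "y \<in> S" "r = dist x y" "r \<le> R" and n_le: "n \<le> card (cball x r \<inter> S)"
    by (auto simp: D_def)
  have "card (ball x r \<inter> S) < n"
  proof (rule ccontr)
    assume "\<not> card (ball x r \<inter> S) < n"
    then have n_le_ball: "n \<le> card (ball x r \<inter> S)"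
      by simp
    have "finite (ball x r \<inter> S)"
      by (rule finite_subset[OF _ finite_cball[of r]]) auto
    moreover have "ball x r \<inter> S \<noteq> {}"
      using n_le_ball \<open>n \<ge> 1\<close> by auto
    ultimately obtain z where z: "z \<in> S" "dist x z < r" "ball x r \<inter> S \<subseteq> cball x (dist x z) \<inter> S"
      by (rule obtain_farthest_in_ball_Int)
    then have "n \<le> card (cball x (dist x z) \<inter> S)"
      using card_mono[OF finite_cball] n_le_ball by (meson le_trans)
    with z \<open>r \<le> R\<close> have "dist x z \<in> D"
      by (auto simp: D_def)
    with r_least \<open>dist x z < r\<close> show False
      by force
  qed
  with y n_le that show ?thesis
    by blast
qed

lemma small_zone_dist_not_less:
  assumes "x \<in> small_zone S n a" "x \<in> small_zone S n b"
  shows "\<not> dist x a < dist x b"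
proof
  assume less: "dist x a < dist x b"
  have "a \<in> S" and card_a: "card (ball x (dist x a) \<inter> S) = n - 1"
    and card_b: "card (ball x (dist x b) \<inter> S) = n - 1"
    and finite_b: "finite (ball x (dist x b) \<inter> S)"
    using assms by (auto simp: small_zone_def Let_def dist_commute)
  have subset: "insert a (ball x (dist x a) \<inter> S) \<subseteq> ball x (dist x b) \<inter> S"
    using less \<open>a \<in> S\<close> by auto
  then have "finite (ball x (dist x a) \<inter> S)"
    using finite_b by (meson finite_subset subset_insertI)
  then have "card (insert a (ball x (dist x a) \<inter> S)) = Suc (n - 1)"
    using card_a by simp
  moreover have "card (insert a (ball x (dist x a) \<inter> S)) \<le> n - 1"
    using card_mono[OF finite_b subset] card_b by simp
  ultimately show False
    by simp
qed

lemma small_zone_disjoint: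
  assumes "a \<noteq> b"
  shows "small_zone S n a \<inter> small_zone S n b = {}"
proof (intro equals0I)
  fix x
  assume x: "x \<in> small_zone S n a \<inter> small_zone S n b"
  then have "dist x a = dist x b"
    using small_zone_dist_not_less by (metis IntD1 IntD2 linorder_neqE_linordered_idom)
  moreover have "sphere x (dist x a) \<inter> S = {a}" "sphere x (dist x b) \<inter> S = {b}"
    using x by (auto simp: small_zone_def Let_def dist_commute)
  ultimately show False
    using assms by simp
qed

theorem mainTheorem1:
  fixes S :: "'a::metric_space set" and n :: nat
  assumes "proper_metric_space TYPE('a)"
    and "path_connected (UNIV :: 'a set)"
    and "discrete_subset S"
    and "n \<ge> 1" and "infinite S \<or> n \<le> card S"
  shows "(\<Union>x0\<in>S. brillouin_zone S n x0) = UNIV \<and>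
         (\<forall>x0\<in>S. \<forall>x1\<in>S. x0 \<noteq> x1 \<longrightarrow> small_zone S n x0 \<inter> small_zone S n x1 = {})"
proof
  note finite_cball = finite_cball_Int_discrete[OF assms(1,3)]
  have "x \<in> (\<Union>x0\<in>S. brillouin_zone S n x0)" for x
  proof -
    obtain y where "y \<in> S" "card (ball x (dist x y) \<inter> S) < n"
      "n \<le> card (cball x (dist x y) \<inter> S)"
      using obtain_nth_nearest_point[OF finite_cball assms(4,5)] .
    then show ?thesis
      using mem_brillouin_zoneI[OF finite_cball] by blast
  qed
  then show "(\<Union>x0\<in>S. brillouin_zone S n x0) = UNIV"
    by blast
  show "\<forall>x0\<in>S. \<forall>x1\<in>S. x0 \<noteq> x1 \<longrightarrow> small_zone S n x0 \<inter> small_zone S n x1 = {}"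
    using small_zone_disjoint by blast
qed

end
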